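(* Let $\mathbf{P}=(P,\le,\mathcal T)$ be a $2$-separated topological poset, and let $F$ be a closed filter in $\mathbf{P}^*$. Put $B=\bigcap F$. Then $$F=\{x\in\mathbf{P}^*: B\subseteq x\}.$$ In particular, $B\neq\emptyset$.
   Context: A topological poset $(P,\le,\mathcal T)$ is a poset with a Hausdorff topology; it is $2$-separated if it admits a continuous order-embedding ($x\le y\iff f(x)\le f(y)$, $f$ injective) into a power of the two-element chain $\{0<1\}$ with the product topology. A final segment is an upward-closed subset of $P$. $\mathbf{P}^*$ denotes the set of continuous order-preserving maps $P\to\{0,1\}$, identified with the clopen final segments of $P$ (via preimage of $1$), a lattice under $\cup,\cap$, with the topology of pointwise convergence (subspace of $\{0,1\}^P$). A filter in $\mathbf{P}^*$ is a nonempty subset closed under finite intersections and under supersets within $\mathbf{P}^*$, not containing $\emptyset$; it is closed if it is closed in this topology. *)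

theory Defs
  imports "HOL-Analysis.Analysis"
begin

definition topological_poset :: "'a topology \<Rightarrow> ('a \<Rightarrow> 'a \<Rightarrow> bool) \<Rightarrow> bool" where
  "topological_poset X le \<longleftrightarrow> Hausdorff_space X \<and>
     (\<forall>x\<in>topspace X. le x x) \<and>
     (\<forall>x\<in>topspace X. \<forall>y\<in>topspace X. le x y \<and> le y x \<longrightarrow> x = y) \<and>
     (\<forall>x\<in>topspace X. \<forall>y\<in>topspace X. \<forall>z\<in>topspace X. le x y \<and> le y z \<longrightarrow> le x z)"

text \<open>The index set is taken inside the type 'a set.\<close>
definition two_separated :: "'a topology \<Rightarrow> ('a \<Rightarrow> 'a \<Rightarrow> bool) \<Rightarrow> bool" where
  "two_separated X le \<longleftrightarrow> topological_poset X le \<and>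
     (\<exists>(I :: 'a set set) (f :: 'a \<Rightarrow> 'a set \<Rightarrow> bool).
        continuous_map X (product_topology (\<lambda>i. discrete_topology (UNIV :: bool set)) I) f \<and>
        inj_on f (topspace X) \<and>
        (\<forall>x\<in>topspace X. \<forall>y\<in>topspace X. le x y \<longleftrightarrow> (\<forall>i\<in>I. f x i \<le> f y i)))"

definition final_segment :: "'a topology \<Rightarrow> ('a \<Rightarrow> 'a \<Rightarrow> bool) \<Rightarrow> 'a set \<Rightarrow> bool" where
  "final_segment X le U \<longleftrightarrow> U \<subseteq> topspace X \<and>
     (\<forall>x\<in>U. \<forall>y\<in>topspace X. le x y \<longrightarrow> y \<in> U)"

text \<open>P*: clopen final segments (= continuous order-preserving maps to {0,1}).\<close>
definition dual :: "'a topology \<Rightarrow> ('a \<Rightarrow> 'a \<Rightarrow> bool) \<Rightarrow> 'a set set" where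
  "dual X le = {U. final_segment X le U \<and> openin X U \<and> closedin X U}"

definition charfun :: "'a topology \<Rightarrow> 'a set \<Rightarrow> 'a \<Rightarrow> bool" where
  "charfun X U = (\<lambda>x\<in>topspace X. x \<in> U)"

text \<open>Topology of pointwise convergence on P*, transported: subspace of bool^P.\<close>
definition dual_topology :: "'a topology \<Rightarrow> ('a \<Rightarrow> 'a \<Rightarrow> bool) \<Rightarrow> ('a \<Rightarrow> bool) topology" where
  "dual_topology X le = subtopology (product_topology (\<lambda>x. discrete_topology (UNIV :: bool set)) (topspace X))
      (charfun X ` dual X le)"

definition dual_filter :: "'a topology \<Rightarrow> ('a \<Rightarrow> 'a \<Rightarrow> bool) \<Rightarrow> 'a set set \<Rightarrow> bool" where
  "dual_filter X le F \<longleftrightarrow> F \<subseteq> dual X le \<and> F \<noteq> {} \<and> {} \<notin> F \<and>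
     (\<forall>U\<in>F. \<forall>V\<in>F. U \<inter> V \<in> F) \<and>
     (\<forall>U\<in>F. \<forall>V\<in>dual X le. U \<subseteq> V \<longrightarrow> V \<in> F)"

definition closed_dual_filter :: "'a topology \<Rightarrow> ('a \<Rightarrow> 'a \<Rightarrow> bool) \<Rightarrow> 'a set set \<Rightarrow> bool" where
  "closed_dual_filter X le F \<longleftrightarrow> dual_filter X le F \<and> closedin (dual_topology X le) (charfun X ` F)"

end

theory Submission
  imports Defs
begin

text \<open>
  A closed filter F contains every clopen final segment x above B = \<Inter>F: for each finite set K
  of points, intersecting finitely many members of F (one missing each point of K - x) and
  adding x yields a member of F that agrees with x on K. So x is a pointwise limit of members
  of F, hence lies in F by closedness. Taking x = {} shows B \<noteq> {}.
\<close>

lemma closedin_discrete_product_finite_agreement: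
  fixes C :: "('i \<Rightarrow> 'b) set"
  assumes C: "closedin (product_topology (\<lambda>i. discrete_topology UNIV) I) C"
    and f: "f \<in> topspace (product_topology (\<lambda>i. discrete_topology UNIV) I)"
    and agree: "\<And>K. finite K \<Longrightarrow> K \<subseteq> I \<Longrightarrow> \<exists>g\<in>C. \<forall>i\<in>K. g i = f i"
  shows "f \<in> C"
proof (rule ccontr)
  let ?T = "product_topology (\<lambda>i. discrete_topology (UNIV :: 'b set)) I"
  assume "f \<notin> C"
  with f have f_out: "f \<in> topspace ?T - C" by blast
  have "openin ?T (topspace ?T - C)"
    using C by (simp add: closedin_def)
  from this[unfolded openin_product_topology_alt, rule_format, OF f_out]
  obtain W where
    W_fin: "finite {i \<in> I. W i \<noteq> UNIV}" and
    f_W: "f \<in> Pi\<^sub>E I W" and W_sub: "Pi\<^sub>E I W \<subseteq> topspace ?T - C"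
    by auto
  define K where "K = {i \<in> I. W i \<noteq> UNIV}"
  obtain g where g: "g \<in> C" "\<forall>i\<in>K. g i = f i"
    using agree[of K] W_fin unfolding K_def by blast
  have "g \<in> extensional I"
    using closedin_subset[OF C] g(1) by (auto simp: PiE_iff)
  moreover have "g i \<in> W i" if "i \<in> I" for i
    using that f_W g(2) by (cases "i \<in> K") (auto simp: K_def)
  ultimately have "g \<in> Pi\<^sub>E I W" by (simp add: PiE_iff)
  with W_sub g(1) show False by blast
qed

lemma dual_subset_topspace: "U \<in> dual X le \<Longrightarrow> U \<subseteq> topspace X"
  by (simp add: dual_def final_segment_def)

lemma dual_Un:
  assumes "U \<in> dual X le" "V \<in> dual X le"
  shows "U \<union> V \<in> dual X le"
  using assms by (auto simp: dual_def final_segment_def)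

lemma inj_on_charfun_dual: "inj_on (charfun X) (dual X le)"
proof (rule inj_onI)
  fix U V assume U: "U \<in> dual X le" and V: "V \<in> dual X le" and eq: "charfun X U = charfun X V"
  have "p \<in> U \<longleftrightarrow> p \<in> V" if "p \<in> topspace X" for p
    using fun_cong[OF eq, of p] that by (simp add: charfun_def)
  with dual_subset_topspace[OF U] dual_subset_topspace[OF V] show "U = V" by blast
qed

lemma charfun_in_topspace:
  "charfun X U \<in> topspace (product_topology (\<lambda>x. discrete_topology UNIV) (topspace X))"
  by (simp add: charfun_def)

lemma dual_filter_Inter_mem:
  assumes "dual_filter X le F" "finite G" "G \<noteq> {}" "G \<subseteq> F"
  shows "\<Inter>G \<in> F"
  using assms(2-4) assms(1)[unfolded dual_filter_def]
  by (induction G rule: finite_ne_induct) auto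

lemma dual_filter_finite_agreement:
  assumes F: "dual_filter X le F" and x: "x \<in> dual X le" and above: "\<Inter>F \<subseteq> x"
    and K: "finite K"
  shows "\<exists>V\<in>F. \<forall>i\<in>K. i \<in> V \<longleftrightarrow> i \<in> x"
proof -
  have F_dual: "F \<subseteq> dual X le" and "F \<noteq> {}"
    and F_up: "\<And>U V. U \<in> F \<Longrightarrow> V \<in> dual X le \<Longrightarrow> U \<subseteq> V \<Longrightarrow> V \<in> F"
    using F by (auto simp: dual_filter_def)
  obtain U0 where U0: "U0 \<in> F" using \<open>F \<noteq> {}\<close> by blast
  have "\<forall>i\<in>K - x. \<exists>U\<in>F. i \<notin> U" using above by blast
  then obtain miss where miss: "\<And>i. i \<in> K - x \<Longrightarrow> miss i \<in> F \<and> i \<notin> miss i"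
    by metis
  define G where "G = insert U0 (miss ` (K - x))"
  have G_F: "\<Inter>G \<in> F"
    using dual_filter_Inter_mem[OF F, of G] K U0 miss unfolding G_def by blast
  have "x \<union> \<Inter>G \<in> F"
    using F_up[OF G_F dual_Un[OF x]] G_F F_dual by blast
  moreover have "\<forall>i\<in>K. i \<in> x \<union> \<Inter>G \<longleftrightarrow> i \<in> x"
    using miss unfolding G_def by blast
  ultimately show ?thesis by blast
qed

lemma closed_dual_filter_upward:
  assumes F: "closed_dual_filter X le F" and x: "x \<in> dual X le" and above: "\<Inter>F \<subseteq> x"
  shows "x \<in> F"
proof -
  let ?T = "product_topology (\<lambda>x. discrete_topology (UNIV :: bool set)) (topspace X)"
  have filter: "dual_filter X le F"
    and "closedin (subtopology ?T (charfun X ` dual X le)) (charfun X ` F)"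
    using F by (auto simp: closed_dual_filter_def dual_topology_def)
  then obtain C where C: "closedin ?T C" and F_C: "charfun X ` F = C \<inter> charfun X ` dual X le"
    by (auto simp: closedin_subtopology)
  have "charfun X x \<in> C"
  proof (rule closedin_discrete_product_finite_agreement[OF C charfun_in_topspace])
    fix K assume "finite K" "K \<subseteq> topspace X"
    then obtain V where "V \<in> F" "\<forall>i\<in>K. i \<in> V \<longleftrightarrow> i \<in> x"
      using dual_filter_finite_agreement[OF filter x above] by blast
    with \<open>K \<subseteq> topspace X\<close> F_C show "\<exists>g\<in>C. \<forall>i\<in>K. g i = charfun X x i"
      by (intro bexI[of _ "charfun X V"]) (auto simp: charfun_def)
  qed
  with x F_C have "charfun X x \<in> charfun X ` F" by blast
  moreover have "F \<subseteq> dual X le" using filter by (simp add: dual_filter_def)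
  ultimately show "x \<in> F"
    using inj_on_charfun_dual[of X le] x by (auto dest: inj_onD)
qed

theorem mainTheorem14:
  fixes X :: "'a topology" and le :: "'a \<Rightarrow> 'a \<Rightarrow> bool" and F :: "'a set set"
  assumes "two_separated X le"
    and "closed_dual_filter X le F"
  shows "F = {x \<in> dual X le. \<Inter>F \<subseteq> x} \<and> \<Inter>F \<noteq> {}"
proof -
  have filter: "dual_filter X le F" using assms(2) by (simp add: closed_dual_filter_def)
  then have F_eq: "F = {x \<in> dual X le. \<Inter>F \<subseteq> x}"
    using closed_dual_filter_upward[OF assms(2)] by (auto simp: dual_filter_def)
  have "{} \<in> dual X le" by (simp add: dual_def final_segment_def)
  with F_eq filter have "\<Inter>F \<noteq> {}" by (auto simp: dual_filter_def)
  with F_eq show ?thesis by blast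
qed

end
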